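(* Let $\tau_1>2$ and $\epsilon>0$. Let $\psi_1,\psi_2:\mathbb{N}\to(0,\infty)$ with $\psi_1$ decreasing, $\psi_2$ and $\psi_1-\psi_2$ decreasing, $\lambda(\psi_1)=\tau_1$ and $\lambda(\psi_2)=\tau_2$. Let $\theta\in[0,1)$ be either $0$ or an irrational number with Diophantine approximation exponent $\gamma$ (with $\gamma=1$ if $\theta=0$), and set $\beta_\epsilon:=\gamma^{-2}(\tau_1-1)^2-\epsilon$. Then there is $Q(\epsilon)$ (depending also on $\psi_1,\theta$) such that the following holds. Let $0<c<1$, $x\in\mathbb{R}$, and let $p_1,p_2,q_1,q_2$ be integers with $Q(\epsilon)<q_1<q_2<q_1^{\beta_\epsilon}$ and $q_2$ prime, such that \[\psi_1(q_i)-c\psi_2(q_i)\le\Big|x-\frac{p_i-\theta}{q_i}\Big|\le\psi_1(q_i)\qquad(i=1,2).\] Then there are no integers $p,q$ with $q_1<q<q_2$ such that $\big|x-\frac{p-\theta}{q}\big|<\psi_1(q)-c\psi_2(q)$.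
   Context: For $\psi:\mathbb{N}\to(0,\infty)$, $\lambda(\psi):=-\lim_{q\to\infty}\frac{\log\psi(q)}{\log q}$ (assumed to exist). The Diophantine approximation exponent of an irrational $\theta$ is the infimum of all $\gamma$ such that $|\theta-p/q|\le q^{-\gamma}$ has only finitely many integer solutions $(p,q)$. *)

theory Defs
  imports "HOL-Analysis.Analysis" "HOL-Computational_Algebra.Primes"
begin

definition has_lambda :: "(nat \<Rightarrow> real) \<Rightarrow> real \<Rightarrow> bool" where
  "has_lambda \<psi> \<tau> \<longleftrightarrow> ((\<lambda>q. - ln (\<psi> q) / ln (real q)) \<longlongrightarrow> \<tau>) sequentially"

text \<open>Diophantine approximation exponent (extended real; +infinity if no such gamma).\<close>
definition dioph_exp :: "real \<Rightarrow> ereal" where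
  "dioph_exp \<theta> = Inf {ereal g | g. finite {(p :: int, q :: int). q > 0 \<and>
        \<bar>\<theta> - real_of_int p / real_of_int q\<bar> \<le> real_of_int q powr (- g)}}"

end

theory Submission
  imports Defs
begin

text \<open>Write \<open>A\<^sub>1, A, A\<^sub>2\<close> for the shifted fractions \<open>(p - \<theta>) / q\<close> with denominators
  \<open>q\<^sub>1 < q < q\<^sub>2\<close>. Since \<open>A\<close> is closer to \<open>x\<close> than \<open>A\<^sub>1\<close> is, \<open>A \<noteq> A\<^sub>1\<close>; both lie within
  \<open>\<psi>\<^sub>1(q\<^sub>1) \<approx> q\<^sub>1 ^ (-\<tau>\<^sub>1)\<close> of \<open>x\<close>, while the Diophantine exponent of \<open>\<theta>\<close> bounds their
  distance from below by about \<open>q\<^sub>1 ^ (-1) q ^ (-\<gamma>)\<close>. Hence \<open>q \<ge> q\<^sub>1 ^ ((\<tau>\<^sub>1 - 1) / \<gamma>)\<close> up to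
  small losses, and in the same way \<open>q\<^sub>2 \<ge> q ^ ((\<tau>\<^sub>1 - 1) / \<gamma>)\<close>, contradicting
  \<open>q\<^sub>2 < q\<^sub>1 ^ \<beta>\<^sub>\<epsilon>\<close>. The second step needs \<open>A \<noteq> A\<^sub>2\<close>: this is automatic for irrational \<open>\<theta>\<close>,
  and for \<open>\<theta> = 0\<close> primality of \<open>q\<^sub>2\<close> would make \<open>A\<close> an integer, which is too far from \<open>A\<^sub>1\<close>.\<close>

definition dioph_bound :: "real \<Rightarrow> real \<Rightarrow> real \<Rightarrow> bool" where
  "dioph_bound \<theta> G C \<longleftrightarrow> (\<forall>(n::int) (m::int). 1 \<le> m \<longrightarrow> real_of_int n \<noteq> \<theta> * real_of_int m \<longrightarrow>
      C * real_of_int m powr (1 - G) \<le> \<bar>real_of_int n - \<theta> * real_of_int m\<bar>)"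

lemma dioph_exp_ge_1: "1 \<le> dioph_exp \<theta>"
  unfolding dioph_exp_def
proof (rule Inf_greatest, clarify)
  fix g :: real
  assume fin: "finite {(p :: int, q :: int). q > 0 \<and>
        \<bar>\<theta> - real_of_int p / real_of_int q\<bar> \<le> real_of_int q powr (- g)}" (is "finite ?F")
  show "1 \<le> ereal g"
  proof (rule ccontr)
    assume "\<not> 1 \<le> ereal g"
    hence g: "g \<le> 1" by simp
    define f :: "int \<Rightarrow> int \<times> int" where "f = (\<lambda>q. (\<lfloor>q * \<theta>\<rfloor>, q))"
    have "f ` {0<..} \<subseteq> ?F"
    proof (rule image_subsetI)
      fix q :: int assume "q \<in> {0<..}"
      then have q: "q > 0" by simp
      have "\<bar>\<theta> - \<lfloor>q * \<theta>\<rfloor> / q\<bar> = (q * \<theta> - \<lfloor>q * \<theta>\<rfloor>) / q"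
        using q by (simp add: field_simps)
      also have "\<dots> \<le> 1 / q"
        using q by (intro divide_right_mono) linarith+
      also have "\<dots> = real_of_int q powr (-1)"
        using q by (simp add: powr_minus_divide)
      also have "\<dots> \<le> real_of_int q powr (-g)"
        using q g by (intro powr_mono) auto
      finally show "f q \<in> ?F"
        using q by (simp add: f_def)
    qed
    moreover have "infinite (f ` {0<..})"
      using finite_imageD[of f "{0::int<..}"] by (auto simp: f_def inj_on_def infinite_Ioi)
    ultimately show False
      using fin finite_subset by blast
  qed
qed

lemma dioph_bound_zero: "1 \<le> G \<Longrightarrow> dioph_bound 0 G 1"
  unfolding dioph_bound_def
proof (intro allI impI)
  fix n m :: int assume "1 \<le> G" "1 \<le> m" "real_of_int n \<noteq> 0 * real_of_int m"
  then have "real_of_int m powr (1 - G) \<le> real_of_int m powr 0" and "1 \<le> \<bar>real_of_int n\<bar>"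
    by (intro powr_mono, auto)
  then show "1 * real_of_int m powr (1 - G) \<le> \<bar>real_of_int n - 0 * real_of_int m\<bar>"
    using \<open>1 \<le> m\<close> by simp
qed

lemma dioph_bound_if_dioph_exp_less:
  assumes irrational: "\<theta> \<notin> \<rat>" and less: "dioph_exp \<theta> < ereal G"
  shows "\<exists>C>0. dioph_bound \<theta> G C"
proof -
  obtain g where "g < G" and fin: "finite {(p :: int, q :: int). q > 0 \<and>
        \<bar>\<theta> - real_of_int p / real_of_int q\<bar> \<le> real_of_int q powr (- g)}" (is "finite ?F")
    using less unfolding dioph_exp_def by (auto simp: Inf_less_iff)
  define f where "f = (\<lambda>(n::int, m::int). \<bar>m * \<theta> - n\<bar> * real_of_int m powr (G - 1))"
  define C where "C = Min (insert 1 (f ` ?F))"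
  have "f z > 0" if "z \<in> ?F" for z
  proof -
    obtain n m where z: "z = (n, m)" and m: "m > 0" using \<open>z \<in> ?F\<close> by (cases z) auto
    have "m * \<theta> \<noteq> n"
    proof
      assume "m * \<theta> = n"
      then have "\<theta> = n / m" using m by (simp add: field_simps)
      with irrational show False by simp
    qed
    then show ?thesis using m by (simp add: f_def z)
  qed
  then have C: "0 < C" "C \<le> 1"
    using fin by (auto simp: C_def)
  have "dioph_bound \<theta> G C"
    unfolding dioph_bound_def
  proof (intro allI impI)
    fix n m :: int assume m: "1 \<le> m"
    have powr_cancel: "real_of_int m powr (G - 1) * real_of_int m powr (1 - G) = 1"
      using m by (simp add: powr_add[symmetric])
    show "C * real_of_int m powr (1 - G) \<le> \<bar>real_of_int n - \<theta> * real_of_int m\<bar>"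
    proof (cases "(n, m) \<in> ?F")
      case True
      then have "C \<le> f (n, m)" unfolding C_def using fin by simp
      then have "C * real_of_int m powr (1 - G) \<le> f (n, m) * real_of_int m powr (1 - G)"
        by (intro mult_right_mono) auto
      also have "\<dots> = \<bar>m * \<theta> - n\<bar>" using powr_cancel by (simp add: f_def mult.assoc)
      finally show ?thesis by (simp add: abs_minus_commute mult.commute)
    next
      case False
      then have far: "real_of_int m powr (-g) < \<bar>\<theta> - n / m\<bar>" using m by auto
      have "real_of_int m powr (-G) \<le> real_of_int m powr (-g)"
        using m \<open>g < G\<close> by (intro powr_mono) auto
      then have "m * real_of_int m powr (-G) < m * \<bar>\<theta> - n / m\<bar>" using far m by simp
      also have "m * \<bar>\<theta> - n / m\<bar> = \<bar>real_of_int n - \<theta> * m\<bar>"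
        using m by (simp add: abs_mult[symmetric] field_simps abs_minus_commute)
      also have "m * real_of_int m powr (-G) = real_of_int m powr (1 - G)"
        using m by (simp add: powr_diff powr_minus_divide)
      finally have "real_of_int m powr (1 - G) < \<bar>real_of_int n - \<theta> * m\<bar>" .
      moreover have "C * real_of_int m powr (1 - G) \<le> real_of_int m powr (1 - G)"
        using C by (intro mult_left_le_one_le) auto
      ultimately show ?thesis by linarith
    qed
  qed
  with C show ?thesis by blast
qed

lemma dioph_bound_exists:
  assumes "(\<theta> = 0 \<and> \<gamma> = 1) \<or> (\<theta> \<notin> \<rat> \<and> ereal \<gamma> = dioph_exp \<theta>)" and "\<gamma> < G"
  shows "\<exists>C>0. dioph_bound \<theta> G C"
proof (cases "\<theta> = 0")
  case True
  with assms have "dioph_bound \<theta> G 1" using dioph_bound_zero[of G] by auto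
  then show ?thesis using zero_less_one by blast
next
  case False
  with assms have "\<theta> \<notin> \<rat>" "dioph_exp \<theta> < ereal G" by (auto simp flip: less_ereal.simps(1))
  then show ?thesis by (rule dioph_bound_if_dioph_exp_less)
qed

lemma shifted_fractions_neq:
  fixes \<theta> :: real and p p' :: int and q q' :: nat
  assumes "\<theta> \<notin> \<rat>" and "0 < q" "q < q'"
  shows "(p - \<theta>) / q \<noteq> (p' - \<theta>) / q'"
proof
  assume "(p - \<theta>) / q = (p' - \<theta>) / q'"
  then have "(p - \<theta>) * q' = (p' - \<theta>) * q"
    using assms(2,3) by (simp add: field_simps)
  then have "\<theta> = (p * q' - p' * q) / (real q' - real q)"
    using assms(3) by (simp add: field_simps)
  also have "\<dots> \<in> \<rat>" by (intro Rats_divide Rats_diff Rats_mult) auto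
  finally show False using assms(1) by simp
qed

lemma ln_dist_shifted_fractions_ge:
  fixes \<theta> :: real and p p' :: int and q q' :: nat
  assumes bound: "dioph_bound \<theta> G C" and "0 < C" "1 \<le> G" "0 < q" "q < q'"
    and neq: "(p - \<theta>) / q \<noteq> (p' - \<theta>) / q'"
  shows "ln C - G * ln q' - ln q \<le> ln \<bar>(p - \<theta>) / q - (p' - \<theta>) / q'\<bar>"
proof -
  define n where "n = p * int q' - p' * int q"
  define m where "m = int q' - int q"
  have m: "1 \<le> m" "real_of_int m \<le> real q'" using assms(4,5) by (simp_all add: m_def)
  have diff: "(p - \<theta>) / q - (p' - \<theta>) / q' = (real_of_int n - \<theta> * m) / (real q * real q')"
    using assms(4,5) by (simp add: n_def m_def field_simps)
  with neq have nonzero: "real_of_int n - \<theta> * m \<noteq> 0" by auto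
  then have "C * real_of_int m powr (1 - G) \<le> \<bar>real_of_int n - \<theta> * m\<bar>"
    using bound m(1) unfolding dioph_bound_def by auto
  then have "ln C + (1 - G) * ln m \<le> ln \<bar>real_of_int n - \<theta> * m\<bar>"
    using \<open>0 < C\<close> m(1) nonzero by (simp add: ln_mult flip: ln_le_cancel_iff)
  moreover have "(1 - G) * ln q' \<le> (1 - G) * ln m"
    using \<open>1 \<le> G\<close> m by (intro mult_left_mono_neg) auto
  moreover have "ln \<bar>(p - \<theta>) / q - (p' - \<theta>) / q'\<bar> = ln \<bar>real_of_int n - \<theta> * m\<bar> - ln q - ln q'"
    using assms(4,5) nonzero unfolding diff by (simp add: ln_div ln_mult)
  ultimately show ?thesis by (simp add: algebra_simps)
qed

lemma ln_denominator_growth: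
  fixes \<theta> :: real and p p' :: int and q q' :: nat
  assumes "dioph_bound \<theta> G C" and "0 < C" "1 \<le> G" "0 < q" "q < q'"
    and neq: "(p - \<theta>) / q \<noteq> (p' - \<theta>) / q'"
    and close: "\<bar>(p - \<theta>) / q - (p' - \<theta>) / q'\<bar> \<le> 2 * r"
    and decay: "ln r \<le> - (a + 1) * ln q"
  shows "ln C - ln 2 + a * ln q \<le> G * ln q'"
proof -
  have "ln \<bar>(p - \<theta>) / q - (p' - \<theta>) / q'\<bar> \<le> ln (2 * r)"
    using neq close by (subst ln_le_cancel_iff) auto
  also have "\<dots> = ln 2 + ln r"
    using neq close by (subst ln_mult) auto
  finally show ?thesis
    using ln_dist_shifted_fractions_ge[OF assms(1-6)] decay by (simp add: algebra_simps)
qed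

lemma fraction_in_Ints_if_eq_prime_denom:
  fixes p p' :: int and q q' :: nat
  assumes "prime q'" "0 < q" "q < q'" and eq: "real_of_int p / q = real_of_int p' / q'"
  shows "real_of_int p / q \<in> \<int>"
proof -
  have "real_of_int (p * int q') = real_of_int (p' * int q)"
    using eq assms(2,3) by (simp add: field_simps)
  then have cross: "p * int q' = p' * int q"
    by (simp only: of_int_eq_iff)
  have "\<not> int q' dvd int q"
    using assms(2,3) by (auto dest: dvd_imp_le)
  moreover have "int q' dvd p' * int q"
    using cross by (metis dvd_triv_right)
  ultimately have "int q' dvd p'"
    using \<open>prime q'\<close> by (simp add: prime_dvd_mult_iff)
  then obtain k where "p' = int q' * k" by (elim dvdE)
  with cross assms(3) have "p = k * int q" by simp
  with assms(2) show ?thesis by simp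
qed

lemma dist_fraction_Ints_ge:
  fixes p :: int and q :: nat and z :: real
  assumes "0 < q" "z \<in> \<int>" "real_of_int p / q \<noteq> z"
  shows "1 / q \<le> \<bar>real_of_int p / q - z\<bar>"
proof -
  obtain k where z: "z = of_int k" using \<open>z \<in> \<int>\<close> by (elim Ints_cases)
  have diff: "real_of_int p / q - z = real_of_int (p - k * int q) / q"
    using assms(1) by (simp add: z field_simps)
  with assms(3) have "p - k * int q \<noteq> 0" by auto
  then have "1 \<le> \<bar>real_of_int (p - k * int q)\<bar>"
    by (simp only: of_int_abs[symmetric] of_int_1_le_iff)
  with assms(1) show ?thesis
    by (simp add: diff divide_right_mono)
qed

lemma antimono_diff_scaled:
  fixes f g :: "'a::order \<Rightarrow> real"
  assumes "antimono f" "antimono (\<lambda>n. f n - g n)" "0 \<le> c" "c \<le> 1"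
  shows "antimono (\<lambda>n. f n - c * g n)"
proof (rule antimonoI)
  fix m n :: 'a assume "m \<le> n"
  then have "(1 - c) * f n \<le> (1 - c) * f m" "c * (f n - g n) \<le> c * (f m - g m)"
    using assms by (auto intro!: mult_left_mono dest: antimonoD)
  then show "f n - c * g n \<le> f m - c * g m" by (simp add: algebra_simps)
qed

lemma exists_ratio_perturbation:
  fixes \<alpha> \<gamma> e :: real
  assumes "0 < \<alpha>" "0 < \<gamma>" "e < \<alpha>\<^sup>2 / \<gamma>\<^sup>2"
  shows "\<exists>a G. 0 < a \<and> a < \<alpha> \<and> \<gamma> < G \<and> e * G\<^sup>2 < a\<^sup>2"
proof -
  have "((\<lambda>\<delta>. (\<alpha> - \<delta>)\<^sup>2 / (\<gamma> + \<delta>)\<^sup>2) \<longlongrightarrow> (\<alpha> - 0)\<^sup>2 / (\<gamma> + 0)\<^sup>2) (at_right 0)"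
    using assms(2) by (intro tendsto_intros) auto
  then have "\<forall>\<^sub>F \<delta> in at_right 0. e < (\<alpha> - \<delta>)\<^sup>2 / (\<gamma> + \<delta>)\<^sup>2"
    using assms(3) by (intro order_tendstoD(1)) auto
  moreover have "\<forall>\<^sub>F \<delta> in at_right 0. \<delta> \<in> {0<..<\<alpha>}"
    using assms(1) by (rule eventually_at_right_real)
  ultimately have "\<forall>\<^sub>F \<delta> in at_right 0. \<delta> \<in> {0<..<\<alpha>} \<and> e < (\<alpha> - \<delta>)\<^sup>2 / (\<gamma> + \<delta>)\<^sup>2"
    by eventually_elim auto
  from eventually_happens[OF this]
  obtain \<delta> where \<delta>: "0 < \<delta>" "\<delta> < \<alpha>" "e < (\<alpha> - \<delta>)\<^sup>2 / (\<gamma> + \<delta>)\<^sup>2"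
    by auto
  then have "e * (\<gamma> + \<delta>)\<^sup>2 < (\<alpha> - \<delta>)\<^sup>2"
    using assms(2) by (simp add: less_divide_eq)
  with \<delta> show ?thesis
    by (intro exI[of _ "\<alpha> - \<delta>"] exI[of _ "\<gamma> + \<delta>"]) auto
qed

lemma has_lambda_eventually_ln_le:
  assumes "has_lambda \<psi> \<tau>" "\<sigma> < \<tau>"
  shows "\<forall>\<^sub>F n in sequentially. ln (\<psi> n) \<le> - \<sigma> * ln (real n)"
proof -
  have "\<forall>\<^sub>F n in sequentially. \<sigma> < - ln (\<psi> n) / ln (real n)"
    using assms unfolding has_lambda_def by (intro order_tendstoD(1))
  moreover have "\<forall>\<^sub>F n in sequentially. 0 < ln (real n)"
    using eventually_ge_at_top[of "2::nat"] by eventually_elim simp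
  ultimately show ?thesis
    by eventually_elim (simp add: field_simps)
qed

lemma iterated_growth_bound:
  fixes G a e c X Y Z :: real
  assumes "0 < G" "0 < a" "e * G\<^sup>2 < a\<^sup>2"
    and "c + a * X \<le> G * Y" "c + a * Y \<le> G * Z" "Z < e * X"
  shows "X \<le> (G + a) * (- c) / (a\<^sup>2 - e * G\<^sup>2)"
proof -
  have "G * (c + a * Y) \<le> G * (G * Z)" "a * (c + a * X) \<le> a * (G * Y)" "G\<^sup>2 * Z < G\<^sup>2 * (e * X)"
    using assms by (auto intro: mult_left_mono)
  then have "X * (a\<^sup>2 - e * G\<^sup>2) \<le> (G + a) * (- c)"
    by (simp add: algebra_simps power2_eq_square)
  with assms(3) show ?thesis by (subst pos_le_divide_eq) (auto simp: algebra_simps)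
qed

lemma ln_le_if_reciprocal_le_decay:
  fixes q :: nat
  assumes "0 < q" "1 / q \<le> 2 * r" "ln r \<le> - (a + 1) * ln q"
  shows "a * ln q \<le> ln 2"
proof -
  have "0 < r" using assms(1,2) by (smt (verit) divide_pos_pos of_nat_0_less_iff)
  then have "ln (1 / q) \<le> ln (2 * r)"
    using assms(1,2) by (subst ln_le_cancel_iff) auto
  also have "\<dots> = ln 2 + ln r"
    using \<open>0 < r\<close> by (simp add: ln_mult)
  finally show ?thesis
    using assms(1,3) by (simp add: ln_div algebra_simps)
qed

lemma no_intermediate_approximation:
  fixes \<psi> \<phi> :: "nat \<Rightarrow> real" and \<theta> x C G a e :: real and p1 p p2 :: int and q1 q q2 :: nat
  assumes bound: "dioph_bound \<theta> G C" and C: "0 < C" and G: "1 \<le> G" and a: "0 < a"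
    and e: "e * G\<^sup>2 < a\<^sup>2" and \<theta>: "\<theta> = 0 \<or> \<theta> \<notin> \<rat>"
    and decay: "\<forall>n\<ge>q1. ln (\<psi> n) \<le> - (a + 1) * ln n"
    and large: "ln 2 / a < ln q1" "(G + a) * (ln 2 - ln C) / (a\<^sup>2 - e * G\<^sup>2) < ln q1"
    and mono: "antimono \<psi>" "antimono \<phi>" and below: "\<And>n. \<phi> n \<le> \<psi> n"
    and q: "q1 < q" "q < q2" "real q2 < real q1 powr e" "prime q2"
    and approx1: "\<phi> q1 \<le> \<bar>x - (p1 - \<theta>) / q1\<bar>" "\<bar>x - (p1 - \<theta>) / q1\<bar> \<le> \<psi> q1"
    and approx2: "\<bar>x - (p2 - \<theta>) / q2\<bar> \<le> \<psi> q2"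
    and approx: "\<bar>x - (p - \<theta>) / q\<bar> < \<phi> q"
  shows False
proof -
  define A1 A A2 where "A1 = (p1 - \<theta>) / q1" and "A = (p - \<theta>) / q" and "A2 = (p2 - \<theta>) / q2"
  have "0 < ln 2 / a" using a by simp
  with large(1) have "0 < q1" by (cases "q1 = 0") auto
  have "\<psi> q \<le> \<psi> q1" "\<psi> q2 \<le> \<psi> q" "\<phi> q \<le> \<phi> q1"
    using q(1,2) by (simp_all add: antimonoD[OF mono(1)] antimonoD[OF mono(2)])
  with approx approx1 approx2 below[of q]
  have "A \<noteq> A1" and close1: "\<bar>A1 - A\<bar> \<le> 2 * \<psi> q1" and close2: "\<bar>A - A2\<bar> \<le> 2 * \<psi> q"
    unfolding A1_def A_def A2_def by auto
  have step1: "ln C - ln 2 + a * ln q1 \<le> G * ln q"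
    using \<open>A \<noteq> A1\<close> close1 decay unfolding A1_def A_def
    by (intro ln_denominator_growth[OF bound C G \<open>0 < q1\<close> q(1), where r = "\<psi> q1"]) auto
  show False
  proof (cases "A = A2")
    case True
    with \<theta> \<open>0 < q1\<close> q(1,2) have "\<theta> = 0"
      using shifted_fractions_neq[of \<theta> q q2 p p2] unfolding A_def A2_def by auto
    with True q have "A \<in> \<int>"
      using fraction_in_Ints_if_eq_prime_denom[of q2 q p p2] unfolding A_def A2_def by auto
    with \<open>\<theta> = 0\<close> \<open>0 < q1\<close> \<open>A \<noteq> A1\<close> have "1 / q1 \<le> \<bar>A1 - A\<bar>"
      using dist_fraction_Ints_ge[of q1 A p1] unfolding A1_def by auto
    with close1 have "a * ln q1 \<le> ln 2"
      using decay \<open>0 < q1\<close> by (intro ln_le_if_reciprocal_le_decay[where r = "\<psi> q1"]) auto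
    with large(1) a show False by (simp add: divide_less_eq mult.commute)
  next
    case False
    have step2: "ln C - ln 2 + a * ln q \<le> G * ln q2"
      using \<open>0 < q1\<close> q(1) False close2 decay unfolding A_def A2_def
      by (intro ln_denominator_growth[OF bound C G _ q(2), where r = "\<psi> q"]) auto
    have "ln q2 < e * ln q1"
      using q \<open>0 < q1\<close> by (simp flip: ln_less_cancel_iff)
    from iterated_growth_bound[OF _ a e step1 step2 this] G large(2) show False by auto
  qed
qed

theorem lemma3:
  fixes \<tau>1 \<epsilon> \<theta> \<gamma> :: real and \<psi>1 :: "nat \<Rightarrow> real"
  assumes "\<tau>1 > 2" and "\<epsilon> > 0"
    and "\<And>q. \<psi>1 q > 0"
    and "antimono \<psi>1"
    and "has_lambda \<psi>1 \<tau>1"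
    and "0 \<le> \<theta>" and "\<theta> < 1"
    and "(\<theta> = 0 \<and> \<gamma> = 1) \<or> (\<theta> \<notin> \<rat> \<and> ereal \<gamma> = dioph_exp \<theta>)"
  shows "\<exists>Q::real. \<forall>(\<psi>2 :: nat \<Rightarrow> real) (\<tau>2::real) (c::real) (x::real)
            (p1::int) (p2::int) (q1::nat) (q2::nat).
     (\<forall>q. \<psi>2 q > 0) \<and> antimono \<psi>2 \<and> antimono (\<lambda>q. \<psi>1 q - \<psi>2 q) \<and>
     has_lambda \<psi>2 \<tau>2 \<and> 0 < c \<and> c < 1 \<and>
     Q < real q1 \<and> q1 < q2 \<and>
     real q2 < real q1 powr ((\<tau>1 - 1)^2 / \<gamma>^2 - \<epsilon>) \<and> prime q2 \<and>
     \<psi>1 q1 - c * \<psi>2 q1 \<le> \<bar>x - (real_of_int p1 - \<theta>) / real q1\<bar> \<and>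
     \<bar>x - (real_of_int p1 - \<theta>) / real q1\<bar> \<le> \<psi>1 q1 \<and>
     \<psi>1 q2 - c * \<psi>2 q2 \<le> \<bar>x - (real_of_int p2 - \<theta>) / real q2\<bar> \<and>
     \<bar>x - (real_of_int p2 - \<theta>) / real q2\<bar> \<le> \<psi>1 q2
     \<longrightarrow> \<not> (\<exists>(p::int) (q::nat). q1 < q \<and> q < q2 \<and>
            \<bar>x - (real_of_int p - \<theta>) / real q\<bar> < \<psi>1 q - c * \<psi>2 q)"
proof -
  have "1 \<le> \<gamma>"
    using assms(8) dioph_exp_ge_1[of \<theta>] by (metis ereal_less_eq(3) one_ereal_def order.refl)
  define \<beta> where "\<beta> = (\<tau>1 - 1)^2 / \<gamma>^2 - \<epsilon>"
  obtain a G where a: "0 < a" "a < \<tau>1 - 1" and G: "\<gamma> < G" and \<beta>: "\<beta> * G\<^sup>2 < a\<^sup>2"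
    using exists_ratio_perturbation[of "\<tau>1 - 1" \<gamma> \<beta>] \<open>1 \<le> \<gamma>\<close> assms(1,2) by (auto simp: \<beta>_def)
  have "1 \<le> G" using G \<open>1 \<le> \<gamma>\<close> by simp
  obtain C where C: "dioph_bound \<theta> G C" "0 < C"
    using dioph_bound_exists[OF assms(8) G] by blast
  obtain N where N: "\<forall>n\<ge>N. ln (\<psi>1 n) \<le> - (a + 1) * ln n"
    using has_lambda_eventually_ln_le[OF assms(5), of "a + 1"] a
    by (auto simp: eventually_sequentially)
  define L where "L = max (ln 2 / a) ((G + a) * (ln 2 - ln C) / (a\<^sup>2 - \<beta> * G\<^sup>2))"
  show ?thesis
  proof (intro exI[of _ "max N (exp L)"] allI impI notI, elim conjE exE, goal_cases)
    case (1 \<psi>2 \<tau>2 c x p1 p2 q1 q2 p q)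
    then have "N < q1" "exp L < q1" by simp_all
    then have "L < ln q1" using ln_less_cancel_iff[of "exp L" q1] by simp
    have "antimono (\<lambda>n. \<psi>1 n - c * \<psi>2 n)"
      using 1 by (intro antimono_diff_scaled[OF assms(4)]) auto
    have below: "\<psi>1 n - c * \<psi>2 n \<le> \<psi>1 n" for n
      using 1 by (simp add: less_imp_le)
    show False
      by (rule no_intermediate_approximation[OF C \<open>1 \<le> G\<close> a(1) \<beta>, where \<psi> = \<psi>1
          and \<phi> = "\<lambda>n. \<psi>1 n - c * \<psi>2 n" and x = x and ?p1.0 = p1 and p = p and ?p2.0 = p2
          and ?q1.0 = q1 and q = q and ?q2.0 = q2])
        (use 1 N \<open>N < q1\<close> \<open>L < ln q1\<close> \<open>antimono (\<lambda>n. \<psi>1 n - c * \<psi>2 n)\<close> below assms(4,8)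
          in \<open>auto simp: L_def \<beta>_def\<close>)
  qed
qed

end
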